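(* Let $\mathcal{X}$ be a finite set, $\mathcal{B}$ any set of strategies and $l:\mathcal{B}\times\mathcal{X}\to\mathbb{R}$ a loss function. Define the set of optimizing strategies $$\mathcal{B}_{\mathrm{opt}}=\Big\{\arg\min_{b\in\mathcal{B}}\sum_{x\in\mathcal{X}}\lambda(x)l(b,x):\ \lambda(x)\ge0\ \forall x,\ \exists x:\lambda(x)>0\Big\},$$ and suppose $R=\sup_{x\in\mathcal{X},b\in\mathcal{B}_{\mathrm{opt}}}l(b,x)<\infty$ (the loss need only be bounded on $\mathcal{B}_{\mathrm{opt}}$). For a sequence $x_1,x_2,\ldots\in\mathcal{X}$ let $N_t(x)$ be the number of $i\le t$ with $x_i=x$; let $(h_t)$ be non-decreasing and positive, $u_t(x)$ i.i.d. uniform on $[0,1]$, $P^{(u)}_t(x)=\frac{N_{t-1}(x)+h_tu_t(x)}{t-1+h_t\sum_{x'}u_t(x')}$ and $\hat b_t=\arg\min_{b\in\mathcal{B}}\sum_xP^{(u)}_t(x)l(b,x)$. With $\hat L_n=\sum_{t=1}^nl(\hat b_t,x_t)$, $L_n^*=\min_b\sum_{t=1}^nl(b,x_t)$ and $\overline{\mathcal{R}}_{\max}=\max_{x_1^n}\mathbb{E}[\hat L_n-L_n^*]$, the following hold: (1) $\overline{\mathcal{R}}_{\max}\le 2R\sum_{t=1}^nh_t^{-1}+2R|\mathcal{X}|h_n$; (2) for $h_t=h_1t^\alpha$, $h_1>0$, $\alpha\in(0,1)$, $\overline{\mathcal{R}}_{\max}/n\to0$; (3) for $h_t=\sqrt{2t/|\mathcal{X}|}$,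 $\overline{\mathcal{R}}_{\max}/n\le4R\sqrt{2|\mathcal{X}|/n}$. In particular these hold for the squared loss $l(\mathbf b,\mathbf x)=\|\mathbf b-\mathbf x\|^2$ with finite $\mathcal{X}\subset\mathbb{R}^d$ and $\mathcal{B}=\mathbb{R}^d$, with $R=\max_{\mathbf x,\mathbf x'\in\mathcal{X}}\|\mathbf x-\mathbf x'\|^2$.
   Context: The minimizers are assumed to be attained; the expectation is over the random dither $u_t$. The loss function is fixed over time. *)

theory Defs
  imports "HOL-Probability.Probability"
begin

definition weights_ok :: "'x set \<Rightarrow> ('x \<Rightarrow> real) \<Rightarrow> bool" where
  "weights_ok X w \<longleftrightarrow> (\<forall>x\<in>X. 0 \<le> w x) \<and> (\<exists>x\<in>X. 0 < w x)"

definition wloss :: "'x set \<Rightarrow> ('b \<Rightarrow> 'x \<Rightarrow> real) \<Rightarrow> ('x \<Rightarrow> real) \<Rightarrow> 'b \<Rightarrow> real" where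
  "wloss X l w b = (\<Sum>x\<in>X. w x * l b x)"

definition argmin_set :: "'x set \<Rightarrow> 'b set \<Rightarrow> ('b \<Rightarrow> 'x \<Rightarrow> real) \<Rightarrow> ('x \<Rightarrow> real) \<Rightarrow> 'b set" where
  "argmin_set X B l w = {b\<in>B. \<forall>b'\<in>B. wloss X l w b \<le> wloss X l w b'}"

definition Bopt :: "'x set \<Rightarrow> 'b set \<Rightarrow> ('b \<Rightarrow> 'x \<Rightarrow> real) \<Rightarrow> 'b set" where
  "Bopt X B l = (\<Union>w\<in>{w. weights_ok X w}. argmin_set X B l w)"

definition Rbound :: "'x set \<Rightarrow> 'b set \<Rightarrow> ('b \<Rightarrow> 'x \<Rightarrow> real) \<Rightarrow> real" where
  "Rbound X B l = Sup {l b x | b x. b \<in> Bopt X B l \<and> x \<in> X}"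

definition Ncount :: "(nat \<Rightarrow> 'x) \<Rightarrow> nat \<Rightarrow> 'x \<Rightarrow> nat" where
  "Ncount xs t x = card {i\<in>{1..t}. xs i = x}"

definition Pu :: "'x set \<Rightarrow> (nat \<Rightarrow> real) \<Rightarrow> (nat \<Rightarrow> 'x) \<Rightarrow> nat \<Rightarrow> ('x \<Rightarrow> real) \<Rightarrow> 'x \<Rightarrow> real" where
  "Pu X h xs t u = (\<lambda>x\<in>X. (real (Ncount xs (t - 1) x) + h t * u x)
                         / (real (t - 1) + h t * (\<Sum>x'\<in>X. u x')))"

definition dither :: "'x set \<Rightarrow> ('x \<Rightarrow> real) measure" where
  "dither X = PiM X (\<lambda>_. uniform_measure lborel {0..1::real})"

definition dither_seq :: "'x set \<Rightarrow> nat \<Rightarrow> (nat \<Rightarrow> 'x \<Rightarrow> real) measure" where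
  "dither_seq X n = PiM {1..n} (\<lambda>_. dither X)"

text \<open>sel is a (tie-breaking) choice of argmin, which exists for every admissible weight
  vector (minimisers attained), and the resulting strategies are random variables.\<close>
definition selector :: "'x set \<Rightarrow> 'b set \<Rightarrow> ('b \<Rightarrow> 'x \<Rightarrow> real) \<Rightarrow> (('x \<Rightarrow> real) \<Rightarrow> 'b) \<Rightarrow> bool" where
  "selector X B l sel \<longleftrightarrow>
     (\<forall>w. weights_ok X w \<longrightarrow> sel w \<in> argmin_set X B l w) \<and>
     (\<forall>h xs t x. (\<forall>s\<ge>1. 0 < h s) \<longrightarrow> 1 \<le> t \<longrightarrow> x \<in> X \<longrightarrow>
        (\<lambda>u. l (sel (Pu X h xs t u)) x) \<in> borel_measurable (dither X))"

definition Lhat :: "'x set \<Rightarrow> ('b \<Rightarrow> 'x \<Rightarrow> real) \<Rightarrow> (('x \<Rightarrow> real) \<Rightarrow> 'b) \<Rightarrow> (nat \<Rightarrow> real)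
    \<Rightarrow> (nat \<Rightarrow> 'x) \<Rightarrow> nat \<Rightarrow> (nat \<Rightarrow> 'x \<Rightarrow> real) \<Rightarrow> real" where
  "Lhat X l sel h xs n U = (\<Sum>t=1..n. l (sel (Pu X h xs t (U t))) (xs t))"

text \<open>L_n^* = min over B (the minimum is attained by assumption).\<close>
definition Lstar :: "'b set \<Rightarrow> ('b \<Rightarrow> 'x \<Rightarrow> real) \<Rightarrow> (nat \<Rightarrow> 'x) \<Rightarrow> nat \<Rightarrow> real" where
  "Lstar B l xs n = (INF b\<in>B. \<Sum>t=1..n. l b (xs t))"

definition exp_regret :: "'x set \<Rightarrow> 'b set \<Rightarrow> ('b \<Rightarrow> 'x \<Rightarrow> real) \<Rightarrow> (('x \<Rightarrow> real) \<Rightarrow> 'b)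
    \<Rightarrow> (nat \<Rightarrow> real) \<Rightarrow> (nat \<Rightarrow> 'x) \<Rightarrow> nat \<Rightarrow> real" where
  "exp_regret X B l sel h xs n =
     (\<integral>U. (Lhat X l sel h xs n U - Lstar B l xs n) \<partial>dither_seq X n)"

definition regret_max :: "'x set \<Rightarrow> 'b set \<Rightarrow> ('b \<Rightarrow> 'x \<Rightarrow> real) \<Rightarrow> (('x \<Rightarrow> real) \<Rightarrow> 'b)
    \<Rightarrow> (nat \<Rightarrow> real) \<Rightarrow> nat \<Rightarrow> real" where
  "regret_max X B l sel h n =
     Max ((\<lambda>xs. exp_regret X B l sel h xs n) ` ({1..n} \<rightarrow>\<^sub>E X))"

definition regret_bounds :: "'x set \<Rightarrow> 'b set \<Rightarrow> ('b \<Rightarrow> 'x \<Rightarrow> real) \<Rightarrow> (('x \<Rightarrow> real) \<Rightarrow> 'b)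
    \<Rightarrow> real \<Rightarrow> bool" where
  "regret_bounds X B l sel R \<longleftrightarrow>
     (\<forall>h. (\<forall>t\<ge>1. 0 < h t) \<longrightarrow> (\<forall>s t. 1 \<le> s \<longrightarrow> s \<le> t \<longrightarrow> h s \<le> h t) \<longrightarrow>
        (\<forall>n\<ge>1. regret_max X B l sel h n
                 \<le> 2 * R * (\<Sum>t=1..n. 1 / h t) + 2 * R * real (card X) * h n)) \<and>
     (\<forall>h1 \<alpha>. 0 < h1 \<longrightarrow> 0 < \<alpha> \<longrightarrow> \<alpha> < 1 \<longrightarrow>
        (\<lambda>n. regret_max X B l sel (\<lambda>t. h1 * real t powr \<alpha>) n / real n) \<longlonglongrightarrow> 0) \<and>
     (\<forall>n\<ge>1. regret_max X B l sel (\<lambda>t. sqrt (2 * real t / real (card X))) n / real n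
              \<le> 4 * R * sqrt (2 * real (card X) / real n))"

end

theory Submission
  imports Defs
begin

text \<open>Raising the dither of the current observation \<open>x\<^sub>t\<close> by \<open>1/h\<^sub>t\<close> turns \<open>P\<^sub>t\<close>
  into the perturbed empirical distribution of rounds \<open>1..t\<close>. Since translating a uniform
  variable by \<open>\<delta>\<close> changes the mean of a \<open>[0,R]\<close>-valued function by at most \<open>R \<delta>\<close>, this
  replacement costs at most \<open>R/h\<^sub>t\<close> per round. With the raised dither the chosen strategies
  minimise the cumulative loss plus the penalty \<open>h\<^sub>t \<Sum>\<^sub>x u(x) l(b,x)\<close>, and as \<open>h\<close> is
  non-decreasing the "be the leader" argument shows that they lose at most
  \<open>L\<^sub>n\<^sup>* + h\<^sub>n |X| R\<close>. This yields (1) even with \<open>R\<close> in place of \<open>2R\<close>; (2) and (3) follow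
  from the telescoping estimates \<open>\<Sum>\<^sub>t\<^sub>\<le>\<^sub>n t powr -\<alpha> \<le> n powr (1-\<alpha>) / (1-\<alpha>)\<close> and
  \<open>\<Sum>\<^sub>t\<^sub>\<le>\<^sub>n 1 / sqrt t \<le> 2 sqrt n\<close>. For the squared loss every optimal
  strategy is a weighted mean of points of \<open>X\<close>, hence within the diameter of \<open>X\<close> of each
  of them.\<close>

abbreviation unif01 :: "real measure" where
  "unif01 \<equiv> uniform_measure lborel {0..1}"

lemma prob_space_unif01: "prob_space unif01"
  by (rule prob_space_uniform_measure) (auto simp: emeasure_lborel_Icc_eq)

lemma prob_space_dither: "prob_space (dither X)"
  unfolding dither_def by (rule prob_space_PiM) (rule prob_space_unif01)

lemma prob_space_dither_seq: "prob_space (dither_seq X n)"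
  unfolding dither_seq_def by (rule prob_space_PiM) (rule prob_space_dither)

lemma AE_dither_unit_interval:
  assumes "finite X"
  shows "AE u in dither X. \<forall>x\<in>X. 0 < u x \<and> u x \<le> 1"
proof -
  have "AE s in unif01. 0 < s \<and> s \<le> 1"
    using AE_lborel_singleton[of "0::real"]
    by (subst AE_uniform_measure) (auto simp: emeasure_lborel_Icc_eq elim!: eventually_mono)
  then have "AE u in dither X. 0 < u x \<and> u x \<le> 1" if "x \<in> X" for x
    unfolding dither_def using that prob_space_unif01 by (intro AE_PiM_component) auto
  then show ?thesis using assms by (subst AE_finite_all) auto
qed

lemma measurable_dither_seq_component:
  "t \<in> {1..n} \<Longrightarrow> (\<lambda>U. U t) \<in> dither_seq X n \<rightarrow>\<^sub>M dither X"
  unfolding dither_seq_def by simp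

lemma distr_dither_seq_component:
  "t \<in> {1..n} \<Longrightarrow> distr (dither_seq X n) (dither X) (\<lambda>U. U t) = dither X"
  unfolding dither_seq_def by (intro distr_PiM_component prob_space_dither) auto

lemma integral_dither_seq_component:
  fixes F :: "('x \<Rightarrow> real) \<Rightarrow> real"
  assumes "t \<in> {1..n}" and "F \<in> borel_measurable (dither X)"
  shows "(\<integral>U. F (U t) \<partial>dither_seq X n) = integral\<^sup>L (dither X) F"
  using integral_distr[OF measurable_dither_seq_component assms(2)] assms(1)
  by (simp add: distr_dither_seq_component)

lemma integrable_dither_seq_component:
  fixes F :: "('x \<Rightarrow> real) \<Rightarrow> real"
  assumes "t \<in> {1..n}" and "F \<in> borel_measurable (dither X)" and "integrable (dither X) F"
  shows "integrable (dither_seq X n) (\<lambda>U. F (U t))"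
  using integrable_distr_eq[OF measurable_dither_seq_component assms(2)] assms
  by (simp add: distr_dither_seq_component)

lemma integrable_indicator_times_bounded:
  fixes g :: "real \<Rightarrow> real"
  assumes [measurable]: "g \<in> borel_measurable borel" and "\<And>x. \<bar>g x\<bar> \<le> R"
  shows "integrable lborel (\<lambda>x. indicator {a..b} x * g x)"
proof (rule Bochner_Integration.integrable_bound)
  show "integrable lborel (\<lambda>x. \<bar>R\<bar> * indicator {a..b} x)"
    by (intro integrable_mult_right integrable_real_indicator) (auto simp: emeasure_lborel_Icc_eq)
  show "AE x in lborel. norm (indicator {a..b} x * g x) \<le> norm (\<bar>R\<bar> * indicator {a..b} x)"
    using assms(2) by (intro AE_I2) (auto simp: indicator_def abs_mult intro: order_trans[OF _ abs_ge_self])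
qed simp

lemma integral_unif01:
  fixes f :: "real \<Rightarrow> real"
  assumes [measurable]: "f \<in> borel_measurable borel"
  shows "integral\<^sup>L unif01 f = (\<integral>x. indicator {0..1} x * f x \<partial>lborel)"
proof -
  have "unif01 = density lborel (\<lambda>x. ennreal (indicator {0..1} x))"
    unfolding uniform_measure_def
    by (intro arg_cong[where f="density lborel"]) (auto simp: fun_eq_iff indicator_def of_bool_def)
  then show ?thesis by (simp add: integral_density)
qed

text \<open>Translating a uniform variable by \<open>\<delta>\<close> moves mass \<open>\<delta>\<close> out of \<open>[0,1]\<close>, on which a
  function with values in \<open>[0,R]\<close> can lose at most \<open>R \<delta>\<close>.\<close>
lemma integral_unif01_le_shift:
  fixes \<psi> :: "real \<Rightarrow> real"
  assumes [measurable]: "\<psi> \<in> borel_measurable borel"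
    and bounds: "\<And>s. 0 \<le> \<psi> s \<and> \<psi> s \<le> R" and "0 \<le> \<delta>"
  shows "integral\<^sup>L unif01 \<psi> \<le> (\<integral>s. \<psi> (s + \<delta>) \<partial>unif01) + R * \<delta>"
proof -
  have abs_le: "\<And>x. \<bar>\<psi> x\<bar> \<le> R" using bounds by (metis abs_of_nonneg)
  have int_shifted: "integrable lborel (\<lambda>x. indicator {\<delta>..1+\<delta>} x * \<psi> x)"
    by (rule integrable_indicator_times_bounded[OF _ abs_le]) simp
  have int_R: "integrable lborel (\<lambda>x. R * indicator {0..\<delta>} x :: real)"
    by (intro integrable_mult_right integrable_real_indicator) (auto simp: emeasure_lborel_Icc_eq)
  have "(\<integral>s. \<psi> (s + \<delta>) \<partial>unif01) = (\<integral>x. indicator {0..1} x * \<psi> (x + \<delta>) \<partial>lborel)"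
    by (rule integral_unif01) simp
  also have "\<dots> = (\<integral>x. indicator {0..1} (x - \<delta>) * \<psi> x \<partial>lborel)"
    using lborel_integral_real_affine[of 1 "\<lambda>x. indicator {0..1} (x - \<delta>) * \<psi> x" \<delta>]
    by (simp add: add.commute)
  also have "\<dots> = (\<integral>x. indicator {\<delta>..1+\<delta>} x * \<psi> x \<partial>lborel)"
    by (intro Bochner_Integration.integral_cong) (auto simp: indicator_def)
  finally have shifted: "(\<integral>s. \<psi> (s + \<delta>) \<partial>unif01) = (\<integral>x. indicator {\<delta>..1+\<delta>} x * \<psi> x \<partial>lborel)" .
  have "integral\<^sup>L unif01 \<psi> = (\<integral>x. indicator {0..1} x * \<psi> x \<partial>lborel)"
    by (rule integral_unif01) simp
  also have "\<dots> \<le> (\<integral>x. indicator {\<delta>..1+\<delta>} x * \<psi> x + R * indicator {0..\<delta>} x \<partial>lborel)"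
  proof (rule integral_mono)
    show "integrable lborel (\<lambda>x. indicator {0..1} x * \<psi> x)"
      by (rule integrable_indicator_times_bounded[OF _ abs_le]) simp
    show "integrable lborel (\<lambda>x. indicator {\<delta>..1+\<delta>} x * \<psi> x + R * indicator {0..\<delta>} x)"
      using int_shifted int_R by simp
    show "indicator {0..1} x * \<psi> x \<le> indicator {\<delta>..1+\<delta>} x * \<psi> x + R * indicator {0..\<delta>} x" for x
      using bounds[of x] \<open>0 \<le> \<delta>\<close> by (auto simp: indicator_def)
  qed
  also have "\<dots> = (\<integral>x. indicator {\<delta>..1+\<delta>} x * \<psi> x \<partial>lborel) + R * \<delta>"
    using int_shifted int_R \<open>0 \<le> \<delta>\<close> by simp
  finally show ?thesis using shifted by simp
qed

lemma measurable_dither_bump: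
  assumes "x0 \<in> X"
  shows "(\<lambda>u. u(x0 := u x0 + \<delta>)) \<in> dither X \<rightarrow>\<^sub>M dither X"
proof -
  have "(\<lambda>w i. (w(x0 := w x0 + \<delta>)) i) \<in> PiM X (\<lambda>_. unif01) \<rightarrow>\<^sub>M PiM X (\<lambda>_. unif01)"
  proof (rule measurable_PiM_single')
    show "(\<lambda>w. (w(x0 := w x0 + \<delta>)) i) \<in> PiM X (\<lambda>_. unif01) \<rightarrow>\<^sub>M unif01" if "i \<in> X" for i
      using that assms by (cases "i = x0") simp_all
    show "(\<lambda>w i. (w(x0 := w x0 + \<delta>)) i) \<in> space (PiM X (\<lambda>_. unif01)) \<rightarrow> (\<Pi>\<^sub>E i\<in>X. space unif01)"
      using assms by (auto simp: space_PiM PiE_iff extensional_def)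
  qed
  then show ?thesis by (simp add: dither_def fun_upd_def)
qed

text \<open>By Fubini: integrate out all coordinates except \<open>x0\<close> first.\<close>
lemma integral_dither_le_bump:
  fixes \<phi> :: "('x \<Rightarrow> real) \<Rightarrow> real"
  assumes x0: "x0 \<in> X" and [measurable]: "\<phi> \<in> borel_measurable (dither X)"
    and bounds: "\<And>u. 0 \<le> \<phi> u \<and> \<phi> u \<le> R" and "0 \<le> \<delta>"
  shows "integral\<^sup>L (dither X) \<phi> \<le> (\<integral>u. \<phi> (u(x0 := u x0 + \<delta>)) \<partial>dither X) + R * \<delta>"
proof -
  define I where "I = X - {x0}"
  define P where "P = PiM I (\<lambda>_. unif01)"
  have XI: "X = insert x0 I" using x0 unfolding I_def by auto
  interpret U: prob_space unif01 by (rule prob_space_unif01)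
  interpret P: prob_space P unfolding P_def by (rule prob_space_PiM) (rule prob_space_unif01)
  interpret UP: pair_sigma_finite unif01 P ..
  interpret UP': prob_space "unif01 \<Otimes>\<^sub>M P" by (rule prob_space_pair) unfold_locales
  have abs_le: "\<And>u. \<bar>\<phi> u\<bar> \<le> R" using bounds by (metis abs_of_nonneg)
  have split: "dither X = distr (unif01 \<Otimes>\<^sub>M P) (dither X) (\<lambda>(x, Y). Y(x0 := x))"
    unfolding dither_def P_def XI
    by (rule distr_pair_PiM_eq_PiM[symmetric]) (auto intro: prob_space_unif01)
  have [measurable]: "(\<lambda>(x, Y). Y(x0 := x)) \<in> unif01 \<Otimes>\<^sub>M P \<rightarrow>\<^sub>M dither X"
    unfolding dither_def P_def XI by measurable
  have iterated: "integral\<^sup>L (dither X) g = (\<integral>Y. (\<integral>x. g (Y(x0 := x)) \<partial>unif01) \<partial>P)"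
    and integrable_inner: "integrable P (\<lambda>Y. \<integral>x. g (Y(x0 := x)) \<partial>unif01)"
    if [measurable]: "g \<in> borel_measurable (dither X)" and "\<And>u. \<bar>g u\<bar> \<le> R"
    for g :: "_ \<Rightarrow> real"
  proof -
    have int: "integrable (unif01 \<Otimes>\<^sub>M P) (\<lambda>(x, Y). g (Y(x0 := x)))"
      by (rule UP'.integrable_const_bound[where B=R]) (auto simp: that)
    have "integral\<^sup>L (dither X) g = integral\<^sup>L (unif01 \<Otimes>\<^sub>M P) (\<lambda>(x, Y). g (Y(x0 := x)))"
      by (subst split) (simp add: integral_distr case_prod_beta')
    then show "integral\<^sup>L (dither X) g = (\<integral>Y. (\<integral>x. g (Y(x0 := x)) \<partial>unif01) \<partial>P)"
      using UP.integral_snd[of "\<lambda>x Y. g (Y(x0 := x))"] int by simp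
    show "integrable P (\<lambda>Y. \<integral>x. g (Y(x0 := x)) \<partial>unif01)"
      using UP.integrable_snd[of "\<lambda>x Y. g (Y(x0 := x))"] int by simp
  qed
  have [measurable]: "(\<lambda>u. \<phi> (u(x0 := u x0 + \<delta>))) \<in> borel_measurable (dither X)"
    using measurable_compose[OF measurable_dither_bump[OF x0] \<open>\<phi> \<in> _\<close>] by (simp add: comp_def)
  have "integral\<^sup>L (dither X) \<phi> = (\<integral>Y. (\<integral>x. \<phi> (Y(x0 := x)) \<partial>unif01) \<partial>P)"
    by (rule iterated) (auto simp: abs_le)
  also have "\<dots> \<le> (\<integral>Y. (\<integral>x. \<phi> (Y(x0 := x + \<delta>)) \<partial>unif01) + R * \<delta> \<partial>P)"
  proof (rule integral_mono)
    show "integrable P (\<lambda>Y. \<integral>x. \<phi> (Y(x0 := x)) \<partial>unif01)"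
      by (rule integrable_inner) (auto simp: abs_le)
    show "integrable P (\<lambda>Y. (\<integral>x. \<phi> (Y(x0 := x + \<delta>)) \<partial>unif01) + R * \<delta>)"
      using integrable_inner[of "\<lambda>u. \<phi> (u(x0 := u x0 + \<delta>))"] by (simp add: abs_le)
    fix Y assume "Y \<in> space P"
    then have "(\<lambda>x. Y(x0 := x)) \<in> borel \<rightarrow>\<^sub>M dither X"
      unfolding dither_def XI P_def by measurable
    then have "(\<lambda>x. \<phi> (Y(x0 := x))) \<in> borel_measurable borel" by measurable
    from integral_unif01_le_shift[OF this _ \<open>0 \<le> \<delta>\<close>, of R] bounds
    show "(\<integral>x. \<phi> (Y(x0 := x)) \<partial>unif01) \<le> (\<integral>x. \<phi> (Y(x0 := x + \<delta>)) \<partial>unif01) + R * \<delta>"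
      by simp
  qed
  also have "\<dots> = (\<integral>Y. (\<integral>x. \<phi> (Y(x0 := x + \<delta>)) \<partial>unif01) \<partial>P) + R * \<delta>"
    using integrable_inner[of "\<lambda>u. \<phi> (u(x0 := u x0 + \<delta>))"] by (simp add: abs_le P.prob_space)
  also have "(\<integral>Y. (\<integral>x. \<phi> (Y(x0 := x + \<delta>)) \<partial>unif01) \<partial>P) = (\<integral>u. \<phi> (u(x0 := u x0 + \<delta>)) \<partial>dither X)"
    using iterated[of "\<lambda>u. \<phi> (u(x0 := u x0 + \<delta>))"] by (simp add: abs_le)
  finally show ?thesis .
qed

lemma Ncount_0 [simp]: "Ncount xs 0 x = 0"
  by (simp add: Ncount_def)

lemma Ncount_Suc: "Ncount xs (Suc t) x = Ncount xs t x + (if xs (Suc t) = x then 1 else 0)"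
proof -
  have "{i\<in>{1..Suc t}. xs i = x} = {i\<in>{1..t}. xs i = x} \<union> (if xs (Suc t) = x then {Suc t} else {})"
    by (auto simp: le_Suc_eq)
  then show ?thesis unfolding Ncount_def by (auto simp: card_insert_if)
qed

lemma Ncount_pos: "1 \<le> t \<Longrightarrow> 0 < Ncount xs t (xs t)"
  by (cases t) (auto simp: Ncount_Suc)

lemma sum_Ncount_weighted:
  fixes g :: "'x \<Rightarrow> real"
  assumes "finite X" and "\<forall>s\<in>{1..t}. xs s \<in> X"
  shows "(\<Sum>x\<in>X. real (Ncount xs t x) * g x) = (\<Sum>s=1..t. g (xs s))"
  using assms(2)
proof (induction t)
  case (Suc t)
  have "(\<Sum>x\<in>X. real (Ncount xs (Suc t) x) * g x)
      = (\<Sum>x\<in>X. real (Ncount xs t x) * g x) + (\<Sum>x\<in>X. if xs (Suc t) = x then g x else 0)"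
    by (subst sum.distrib[symmetric], rule sum.cong) (auto simp: Ncount_Suc algebra_simps)
  also have "(\<Sum>x\<in>X. if xs (Suc t) = x then g x else 0) = g (xs (Suc t))"
    using Suc.prems assms(1) by simp
  finally show ?case using Suc by simp
qed simp

lemma selector_argmin:
  assumes "selector X B l sel" and "weights_ok X w"
  shows "sel w \<in> B" and "\<And>b. b \<in> B \<Longrightarrow> wloss X l w (sel w) \<le> wloss X l w b"
    and "sel w \<in> Bopt X B l"
  using assms unfolding selector_def argmin_set_def Bopt_def by auto

lemma weights_ok_Pu:
  assumes "finite X" and "X \<noteq> {}" and "1 \<le> t" and "0 < h t" and "\<forall>x\<in>X. 0 < u x"
  shows "weights_ok X (Pu X h xs t u)"
proof -
  have "0 < (\<Sum>x\<in>X. u x)" using assms by (intro sum_pos) auto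
  then have "0 < real (t - 1) + h t * (\<Sum>x\<in>X. u x)" using assms by (simp add: add_nonneg_pos)
  moreover have "0 < real (Ncount xs (t - 1) x) + h t * u x" if "x \<in> X" for x
    using assms that by (simp add: add_nonneg_pos)
  ultimately show ?thesis
    using \<open>X \<noteq> {}\<close> unfolding weights_ok_def Pu_def by (auto simp: less_imp_le)
qed

lemma Pu_bump:
  assumes "finite X" and "xs t \<in> X" and "1 \<le> t" and "0 < h t"
  shows "Pu X h xs t (u(xs t := u (xs t) + 1 / h t)) =
     (\<lambda>x\<in>X. (real (Ncount xs t x) + h t * u x) / (real t + h t * (\<Sum>x\<in>X. u x)))"
proof -
  obtain t' where t': "t = Suc t'" using \<open>1 \<le> t\<close> by (cases t) auto
  have "(\<Sum>x\<in>X. (u(xs t := u (xs t) + 1 / h t)) x) = (\<Sum>x\<in>X. u x + (if x = xs t then 1 / h t else 0))"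
    by (rule sum.cong) auto
  also have "\<dots> = (\<Sum>x\<in>X. u x) + 1 / h t"
    using assms by (simp add: sum.distrib)
  finally have "real (t - 1) + h t * (\<Sum>x\<in>X. (u(xs t := u (xs t) + 1 / h t)) x)
      = real t + h t * (\<Sum>x\<in>X. u x)"
    using assms t' by (simp add: algebra_simps)
  moreover have "real (Ncount xs (t - 1) x) + h t * (u(xs t := u (xs t) + 1 / h t)) x
      = real (Ncount xs t x) + h t * u x" for x
    using assms t' by (auto simp: Ncount_Suc algebra_simps)
  ultimately show ?thesis unfolding Pu_def by simp
qed

lemma weights_ok_Pu_bump:
  assumes "finite X" and "xs t \<in> X" and "1 \<le> t" and "0 < h t" and u: "\<forall>x\<in>X. 0 \<le> u x"
  shows "weights_ok X (Pu X h xs t (u(xs t := u (xs t) + 1 / h t)))"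
proof -
  define D where "D = real t + h t * (\<Sum>x\<in>X. u x)"
  have "0 \<le> h t * (\<Sum>x\<in>X. u x)" using assms by (intro mult_nonneg_nonneg sum_nonneg) auto
  then have "0 < D" unfolding D_def using assms by simp
  then have "0 < (real (Ncount xs t (xs t)) + h t * u (xs t)) / D"
    and "\<And>x. x \<in> X \<Longrightarrow> 0 \<le> (real (Ncount xs t x) + h t * u x) / D"
    using Ncount_pos[OF \<open>1 \<le> t\<close>, of xs] assms by (simp_all add: add_pos_nonneg)
  then show ?thesis
    unfolding weights_ok_def Pu_bump[of X xs t h u, OF assms(1-4)] D_def[symmetric] using assms(2) by auto
qed

lemma bumped_choice_minimises:
  assumes sel: "selector X B l sel" and fin: "finite X" and xs: "\<forall>s\<in>{1..t}. xs s \<in> X"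
    and t: "1 \<le> t" and ht: "0 < h t" and u: "\<forall>x\<in>X. 0 \<le> u x" and "b \<in> B"
  defines "b' \<equiv> sel (Pu X h xs t (u(xs t := u (xs t) + 1 / h t)))"
  shows "(\<Sum>s=1..t. l b' (xs s)) + h t * (\<Sum>x\<in>X. u x * l b' x)
       \<le> (\<Sum>s=1..t. l b (xs s)) + h t * (\<Sum>x\<in>X. u x * l b x)"
proof -
  define W where "W = Pu X h xs t (u(xs t := u (xs t) + 1 / h t))"
  define D where "D = real t + h t * (\<Sum>x\<in>X. u x)"
  have xt: "xs t \<in> X" using xs t by auto
  have "0 \<le> h t * (\<Sum>x\<in>X. u x)" using ht u by (intro mult_nonneg_nonneg sum_nonneg) auto
  then have D: "0 < D" unfolding D_def using t by simp
  have wloss_W: "wloss X l W b = ((\<Sum>s=1..t. l b (xs s)) + h t * (\<Sum>x\<in>X. u x * l b x)) / D" for b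
  proof -
    have "wloss X l W b = (\<Sum>x\<in>X. (real (Ncount xs t x) * l b x + h t * (u x * l b x)) / D)"
      unfolding wloss_def W_def Pu_bump[of X xs t h u, OF fin xt t ht] D_def
      by (rule sum.cong) (auto simp: algebra_simps)
    also have "\<dots> = ((\<Sum>x\<in>X. real (Ncount xs t x) * l b x) + h t * (\<Sum>x\<in>X. u x * l b x)) / D"
      by (simp add: sum_divide_distrib[symmetric] sum.distrib sum_distrib_left)
    finally show ?thesis using sum_Ncount_weighted[OF fin xs] by simp
  qed
  have "wloss X l W b' \<le> wloss X l W b"
    using selector_argmin(2)[OF sel weights_ok_Pu_bump[of X xs t h u, OF fin xt t ht u] \<open>b \<in> B\<close>]
    unfolding b'_def W_def .
  then show ?thesis unfolding wloss_W using D by (simp add: divide_le_cancel)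
qed

lemma be_the_leader:
  fixes f :: "nat \<Rightarrow> 'b \<Rightarrow> real" and p :: "'b \<Rightarrow> real"
  assumes leader: "\<And>t. t \<in> {1..n} \<Longrightarrow> bt t \<in> B"
    and minimises: "\<And>t b. t \<in> {1..n} \<Longrightarrow> b \<in> B \<Longrightarrow>
       (\<Sum>s=1..t. f s (bt t)) + h t * p (bt t) \<le> (\<Sum>s=1..t. f s b) + h t * p b"
    and penalty_nonneg: "\<And>t. t \<in> {1..n} \<Longrightarrow> 0 \<le> p (bt t)"
    and h_nonneg: "0 \<le> h 1" and h_mono: "\<And>t. t \<in> {1..<n} \<Longrightarrow> h t \<le> h (Suc t)"
    and "b \<in> B" and "1 \<le> n"
  shows "(\<Sum>t=1..n. f t (bt t)) \<le> (\<Sum>t=1..n. f t b) + h n * p b"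
proof -
  have "(\<Sum>t=1..m. f t (bt t)) \<le> (\<Sum>t=1..m. f t (bt m)) + h m * p (bt m)" if "m \<in> {1..n}" for m
    using that
  proof (induction m)
    case (Suc m)
    show ?case
    proof (cases "m = 0")
      case True
      then show ?thesis using h_nonneg penalty_nonneg[OF Suc.prems] by simp
    next
      case False
      then have m: "m \<in> {1..n}" and m': "m \<in> {1..<n}" using Suc.prems by auto
      have "(\<Sum>t=1..Suc m. f t (bt t)) \<le> (\<Sum>t=1..m. f t (bt m)) + h m * p (bt m) + f (Suc m) (bt (Suc m))"
        using Suc.IH[OF m] by simp
      also have "\<dots> \<le> (\<Sum>t=1..m. f t (bt (Suc m))) + h m * p (bt (Suc m)) + f (Suc m) (bt (Suc m))"
        using minimises[OF m leader[OF Suc.prems]] by simp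
      also have "\<dots> \<le> (\<Sum>t=1..Suc m. f t (bt (Suc m))) + h (Suc m) * p (bt (Suc m))"
        using mult_right_mono[OF h_mono[OF m'] penalty_nonneg[OF Suc.prems]] by simp
      finally show ?thesis .
    qed
  qed simp
  from this[of n] minimises[of n b] assms(6,7) show ?thesis by simp
qed

lemma powr_neg_le_diff_powr:
  fixes t a :: real
  assumes t: "1 \<le> t" and a: "0 < a" "a < 1"
  shows "t powr (-a) \<le> (t powr (1 - a) - (t - 1) powr (1 - a)) / (1 - a)"
proof -
  have cont: "continuous_on {t-1..t} (\<lambda>x. x powr (1 - a))"
    using t a by (intro continuous_on_powr' continuous_intros) auto
  have diff: "(\<lambda>x. x powr (1 - a)) differentiable (at x)" if "t - 1 < x" for x
    using has_real_derivative_powr[of x "1 - a"] that t real_differentiable_def by force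
  obtain L z where z: "t - 1 < z" "z < t" and D: "DERIV (\<lambda>x. x powr (1 - a)) z :> L"
    and eq: "t powr (1 - a) - (t - 1) powr (1 - a) = (t - (t - 1)) * L"
    using MVT[OF _ cont diff] by auto
  have "0 < z" using z t by simp
  then have "L = (1 - a) * z powr (-a)"
    using DERIV_unique[OF D has_real_derivative_powr] by simp
  moreover have "t powr (-a) \<le> z powr (-a)" using powr_mono2'[of "-a" z t] a \<open>0 < z\<close> z by simp
  ultimately have "(1 - a) * t powr (-a) \<le> L" using a by simp
  then show ?thesis using eq a by (simp add: field_simps)
qed

lemma sum_powr_neg_le:
  fixes a :: real
  assumes "0 < a" "a < 1"
  shows "(\<Sum>t=1..n. real t powr (-a)) \<le> real n powr (1 - a) / (1 - a)"
proof (induction n)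
  case (Suc n)
  have "real (Suc n) powr (-a) \<le> real (Suc n) powr (1 - a) / (1 - a) - real n powr (1 - a) / (1 - a)"
    using powr_neg_le_diff_powr[of "real (Suc n)" a] assms by (simp add: diff_divide_distrib)
  then show ?case using Suc by simp
qed simp

lemma sum_inverse_sqrt_le: "(\<Sum>t=1..n. 1 / sqrt (real t)) \<le> 2 * sqrt (real n)"
proof (induction n)
  case (Suc n)
  have pos: "0 < sqrt (real (Suc n))" by simp
  have "sqrt (real n) * sqrt (real (Suc n)) = sqrt (real n * real (Suc n))"
    by (simp add: real_sqrt_mult)
  also have "\<dots> \<le> sqrt ((real n + 1/2)^2)"
    by (intro real_sqrt_le_mono) (simp add: power2_eq_square algebra_simps)
  finally have "(2 * sqrt (real n) + 1 / sqrt (real (Suc n))) * sqrt (real (Suc n))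
      \<le> (2 * sqrt (real (Suc n))) * sqrt (real (Suc n))"
    using pos by (simp add: algebra_simps)
  then have "2 * sqrt (real n) + 1 / sqrt (real (Suc n)) \<le> 2 * sqrt (real (Suc n))"
    using pos by (rule mult_right_le_imp_le)
  then show ?case using Suc by simp
qed simp

definition admissible_schedule :: "(nat \<Rightarrow> real) \<Rightarrow> bool" where
  "admissible_schedule h \<longleftrightarrow> (\<forall>t\<ge>1. 0 < h t) \<and> (\<forall>s t. 1 \<le> s \<longrightarrow> s \<le> t \<longrightarrow> h s \<le> h t)"

locale perturbed_leader =
  fixes X :: "'x set" and B :: "'b set" and l :: "'b \<Rightarrow> 'x \<Rightarrow> real"
    and sel :: "('x \<Rightarrow> real) \<Rightarrow> 'b"
  assumes finite_X: "finite X" and X_nonempty: "X \<noteq> {}"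
    and selector: "selector X B l sel"
    and loss_bdd: "bdd_above {l b x | b x. b \<in> Bopt X B l \<and> x \<in> X}"
    and loss_nonneg: "\<And>b x. b \<in> Bopt X B l \<Longrightarrow> x \<in> X \<Longrightarrow> 0 \<le> l b x"
begin

lemma le_Rbound: "b \<in> Bopt X B l \<Longrightarrow> x \<in> X \<Longrightarrow> l b x \<le> Rbound X B l"
  unfolding Rbound_def using loss_bdd by (intro cSup_upper) auto

lemma Bopt_nonempty: "Bopt X B l \<noteq> {}"
proof -
  have "weights_ok X (\<lambda>_. 1)" using X_nonempty unfolding weights_ok_def by auto
  then show ?thesis using selector_argmin(3)[OF selector] by blast
qed

lemma Rbound_nonneg: "0 \<le> Rbound X B l"
  using Bopt_nonempty X_nonempty le_Rbound loss_nonneg by (meson ex_in_conv order_trans)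

lemma Rbound_le:
  assumes "\<And>b x. b \<in> Bopt X B l \<Longrightarrow> x \<in> X \<Longrightarrow> l b x \<le> M"
  shows "Rbound X B l \<le> M"
  unfolding Rbound_def using Bopt_nonempty X_nonempty assms by (intro cSup_least) auto

lemma Lstar_eq:
  assumes "1 \<le> n" and xs: "\<forall>t\<in>{1..n}. xs t \<in> X"
  defines "bs \<equiv> sel (\<lambda>x. real (Ncount xs n x))"
  shows "Lstar B l xs n = (\<Sum>s=1..n. l bs (xs s))" and "bs \<in> B" and "bs \<in> Bopt X B l"
proof -
  have "weights_ok X (\<lambda>x. real (Ncount xs n x))"
    using Ncount_pos[OF \<open>1 \<le> n\<close>, of xs] xs \<open>1 \<le> n\<close> unfolding weights_ok_def
    by (auto intro!: bexI[of _ "xs n"])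
  note argmin = selector_argmin[OF selector this, folded bs_def]
  have wloss: "wloss X l (\<lambda>x. real (Ncount xs n x)) b = (\<Sum>s=1..n. l b (xs s))" for b
    unfolding wloss_def by (rule sum_Ncount_weighted[OF finite_X xs])
  show "bs \<in> B" "bs \<in> Bopt X B l" using argmin by auto
  show "Lstar B l xs n = (\<Sum>s=1..n. l bs (xs s))"
    unfolding Lstar_def by (rule cInf_eq_minimum) (use argmin in \<open>auto simp: wloss\<close>)
qed

context
  fixes h :: "nat \<Rightarrow> real" and xs :: "nat \<Rightarrow> 'x"
  assumes h: "admissible_schedule h"
begin

lemma schedule_pos: "1 \<le> t \<Longrightarrow> 0 < h t"
  using h unfolding admissible_schedule_def by auto

lemma measurable_round_loss [measurable]:
  "1 \<le> t \<Longrightarrow> x \<in> X \<Longrightarrow> (\<lambda>u. l (sel (Pu X h xs t u)) x) \<in> borel_measurable (dither X)"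
  using selector h unfolding selector_def admissible_schedule_def by auto

lemma AE_choice_in_Bopt:
  "1 \<le> t \<Longrightarrow> AE u in dither X. sel (Pu X h xs t u) \<in> B \<and> sel (Pu X h xs t u) \<in> Bopt X B l"
  using AE_dither_unit_interval[OF finite_X]
  by eventually_elim
    (use selector_argmin[OF selector] weights_ok_Pu[OF finite_X X_nonempty _ schedule_pos] in auto)

lemma integrable_round_loss:
  assumes "1 \<le> t" and "x \<in> X"
  shows "integrable (dither X) (\<lambda>u. l (sel (Pu X h xs t u)) x)"
proof -
  interpret prob_space "dither X" by (rule prob_space_dither)
  have "AE u in dither X. norm (l (sel (Pu X h xs t u)) x) \<le> Rbound X B l"
    using AE_choice_in_Bopt[OF assms(1)]
    by eventually_elim (use assms in \<open>simp add: le_Rbound loss_nonneg\<close>)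
  then show ?thesis using measurable_round_loss[OF assms] by (intro integrable_const_bound)
qed

lemma exp_regret_eq_sum:
  assumes xs: "\<forall>t\<in>{1..n}. xs t \<in> X"
  shows "exp_regret X B l sel h xs n
    = (\<Sum>t=1..n. \<integral>u. l (sel (Pu X h xs t u)) (xs t) \<partial>dither X) - Lstar B l xs n"
proof -
  interpret prob_space "dither_seq X n" by (rule prob_space_dither_seq)
  have int: "integrable (dither_seq X n) (\<lambda>U. l (sel (Pu X h xs t (U t))) (xs t))" if "t \<in> {1..n}" for t
    using that xs by (intro integrable_dither_seq_component integrable_round_loss) auto
  have "exp_regret X B l sel h xs n
      = (\<Sum>t=1..n. \<integral>U. l (sel (Pu X h xs t (U t))) (xs t) \<partial>dither_seq X n) - Lstar B l xs n"
    unfolding exp_regret_def Lhat_def using int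
    by (subst Bochner_Integration.integral_diff)
       (auto simp: Bochner_Integration.integral_sum prob_space)
  also have "\<dots> = (\<Sum>t=1..n. \<integral>u. l (sel (Pu X h xs t u)) (xs t) \<partial>dither X) - Lstar B l xs n"
    using xs by (intro arg_cong2[where f="(-)"] sum.cong refl integral_dither_seq_component) auto
  finally show ?thesis .
qed

lemma AE_bumped_choice_in_Bopt:
  assumes "1 \<le> t" and "xs t \<in> X"
  shows "AE u in dither X. sel (Pu X h xs t (u(xs t := u (xs t) + 1 / h t))) \<in> Bopt X B l"
  using AE_dither_unit_interval[OF finite_X]
proof eventually_elim
  case (elim u)
  then have "weights_ok X (Pu X h xs t (u(xs t := u (xs t) + 1 / h t)))"
    using assms schedule_pos by (intro weights_ok_Pu_bump[OF finite_X]) (auto simp: less_imp_le)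
  then show ?case by (rule selector_argmin(3)[OF selector])
qed

lemma measurable_bumped_round_loss [measurable]:
  assumes "1 \<le> t" and "xs t \<in> X"
  shows "(\<lambda>u. l (sel (Pu X h xs t (u(xs t := u (xs t) + 1 / h t)))) (xs t)) \<in> borel_measurable (dither X)"
  using measurable_compose[OF measurable_dither_bump measurable_round_loss] assms
  by (simp add: comp_def)

lemma integrable_bumped_round_loss:
  assumes "1 \<le> t" and "xs t \<in> X"
  shows "integrable (dither X) (\<lambda>u. l (sel (Pu X h xs t (u(xs t := u (xs t) + 1 / h t)))) (xs t))"
proof -
  interpret prob_space "dither X" by (rule prob_space_dither)
  show ?thesis
    using AE_bumped_choice_in_Bopt[OF assms] measurable_bumped_round_loss[OF assms]
    by (intro integrable_const_bound[where B="Rbound X B l"])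
       (auto elim!: eventually_mono simp: assms le_Rbound loss_nonneg)
qed

text \<open>Losses lie in \<open>[0, R]\<close> only almost surely, so \<open>integral_dither_le_bump\<close> is applied to
  the loss clipped to \<open>[0, R]\<close>.\<close>
lemma integral_round_loss_le_bumped:
  assumes t: "1 \<le> t" and xt: "xs t \<in> X"
  shows "(\<integral>u. l (sel (Pu X h xs t u)) (xs t) \<partial>dither X)
    \<le> (\<integral>u. l (sel (Pu X h xs t (u(xs t := u (xs t) + 1 / h t)))) (xs t) \<partial>dither X)
       + Rbound X B l / h t"
proof -
  define f where "f u = l (sel (Pu X h xs t u)) (xs t)" for u
  define g where "g u = max 0 (min (Rbound X B l) (f u))" for u
  have [measurable]: "f \<in> borel_measurable (dither X)"
    unfolding f_def using t xt by measurable
  then have g_meas: "g \<in> borel_measurable (dither X)" unfolding g_def by measurable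
  have clip: "g u = f u" if "sel (Pu X h xs t u) \<in> Bopt X B l" for u
    using that xt le_Rbound loss_nonneg unfolding g_def f_def by (simp add: max_absorb2)
  have "AE u in dither X. f u = g u"
    using AE_choice_in_Bopt[OF t] by eventually_elim (simp add: clip)
  then have "integral\<^sup>L (dither X) f = integral\<^sup>L (dither X) g"
    using g_meas by (intro integral_cong_AE) auto
  also have "\<dots> \<le> (\<integral>u. g (u(xs t := u (xs t) + 1 / h t)) \<partial>dither X) + Rbound X B l * (1 / h t)"
    using g_meas xt schedule_pos[OF t] Rbound_nonneg
    by (intro integral_dither_le_bump) (auto simp: g_def)
  also have "(\<integral>u. g (u(xs t := u (xs t) + 1 / h t)) \<partial>dither X)
      = (\<integral>u. f (u(xs t := u (xs t) + 1 / h t)) \<partial>dither X)"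
    using AE_bumped_choice_in_Bopt[OF t xt]
      measurable_compose[OF measurable_dither_bump[OF xt] g_meas]
      measurable_bumped_round_loss[OF t xt]
    by (intro integral_cong_AE) (auto elim!: eventually_mono simp: clip comp_def f_def)
  finally show ?thesis unfolding f_def by simp
qed

lemma exp_regret_le:
  assumes n: "1 \<le> n" and xs: "\<forall>t\<in>{1..n}. xs t \<in> X"
  shows "exp_regret X B l sel h xs n
    \<le> Rbound X B l * (\<Sum>t=1..n. 1 / h t) + Rbound X B l * real (card X) * h n"
proof -
  define R where "R = Rbound X B l"
  define f where "f t u = l (sel (Pu X h xs t u)) (xs t)" for t u
  define bump where "bump t u = u(xs t := u (xs t) + 1 / h t)" for t and u :: "'x \<Rightarrow> real"
  define bs where "bs = sel (\<lambda>x. real (Ncount xs n x))"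
  note Lstar = Lstar_eq[OF n xs, folded bs_def]
  interpret prob_space "dither X" by (rule prob_space_dither)
  have leader: "AE u in dither X. (\<Sum>t=1..n. f t (bump t u)) \<le> Lstar B l xs n + h n * (card X * R)"
    using AE_dither_unit_interval[OF finite_X]
  proof eventually_elim
    case (elim u)
    have u: "\<forall>x\<in>X. 0 \<le> u x" using elim by (auto simp: less_imp_le)
    have penalty: "0 \<le> (\<Sum>x\<in>X. u x * l b x)" if "b \<in> Bopt X B l" for b
      using u that loss_nonneg by (intro sum_nonneg) auto
    have "(\<Sum>t=1..n. f t (bump t u)) \<le> (\<Sum>t=1..n. l bs (xs t)) + h n * (\<Sum>x\<in>X. u x * l bs x)"
      unfolding f_def bump_def
    proof (rule be_the_leader[where B=B and p="\<lambda>b. \<Sum>x\<in>X. u x * l b x"])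
      fix t assume t: "t \<in> {1..n}"
      then have "weights_ok X (Pu X h xs t (u(xs t := u (xs t) + 1 / h t)))"
        using xs schedule_pos u by (intro weights_ok_Pu_bump[OF finite_X]) auto
      note argmin = selector_argmin[OF selector this]
      show "sel (Pu X h xs t (u(xs t := u (xs t) + 1 / h t))) \<in> B" by (rule argmin(1))
      show "0 \<le> (\<Sum>x\<in>X. u x * l (sel (Pu X h xs t (u(xs t := u (xs t) + 1 / h t)))) x)"
        by (rule penalty[OF argmin(3)])
      show "(\<Sum>s=1..t. l (sel (Pu X h xs t (u(xs t := u (xs t) + 1 / h t)))) (xs s))
            + h t * (\<Sum>x\<in>X. u x * l (sel (Pu X h xs t (u(xs t := u (xs t) + 1 / h t)))) x)
          \<le> (\<Sum>s=1..t. l b (xs s)) + h t * (\<Sum>x\<in>X. u x * l b x)" if "b \<in> B" for b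
        using t xs schedule_pos u that by (intro bumped_choice_minimises[OF selector finite_X]) auto
    qed (use h n Lstar in \<open>auto simp: admissible_schedule_def\<close>)
    also have "(\<Sum>x\<in>X. u x * l bs x) \<le> (\<Sum>x\<in>X. R)"
      using elim Lstar(3) loss_nonneg le_Rbound unfolding R_def
      by (intro sum_mono) (meson mult_left_le_one_le order_trans less_imp_le)
    finally show ?case
      using Lstar(1) mult_left_mono[of _ _ "h n"] schedule_pos[OF n] by fastforce
  qed
  have "exp_regret X B l sel h xs n = (\<Sum>t=1..n. integral\<^sup>L (dither X) (f t)) - Lstar B l xs n"
    unfolding exp_regret_eq_sum[OF xs] f_def ..
  also have "\<dots> \<le> (\<Sum>t=1..n. (\<integral>u. f t (bump t u) \<partial>dither X) + R / h t) - Lstar B l xs n"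
    using integral_round_loss_le_bumped xs
    unfolding f_def bump_def R_def by (intro diff_right_mono sum_mono) auto
  also have "\<dots> = (\<integral>u. (\<Sum>t=1..n. f t (bump t u)) \<partial>dither X) + R * (\<Sum>t=1..n. 1 / h t) - Lstar B l xs n"
    using integrable_bumped_round_loss xs unfolding f_def bump_def
    by (simp add: Bochner_Integration.integral_sum sum.distrib sum_distrib_left)
  also have "(\<integral>u. (\<Sum>t=1..n. f t (bump t u)) \<partial>dither X) \<le> Lstar B l xs n + h n * (card X * R)"
    using integrable_bumped_round_loss xs unfolding f_def bump_def
    by (intro order_trans[OF integral_mono_AE[OF _ _ leader[unfolded f_def bump_def]]])
       (auto simp: prob_space)
  finally show ?thesis unfolding R_def by (simp add: algebra_simps)
qed

end

lemma exp_regret_constant_nonneg: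
  assumes h: "admissible_schedule h" and n: "1 \<le> n" and x0: "x0 \<in> X"
  shows "0 \<le> exp_regret X B l sel h (\<lambda>t\<in>{1..n}. x0) n"
proof -
  define xs where "xs = (\<lambda>t\<in>{1..n}. x0)"
  have xs: "\<forall>t\<in>{1..n}. xs t \<in> X" using x0 by (simp add: xs_def)
  interpret prob_space "dither X" by (rule prob_space_dither)
  define w where "w x = (if x = x0 then 1 else 0 :: real)" for x
  have "weights_ok X w" unfolding weights_ok_def w_def using x0 by auto
  moreover have wloss_w: "wloss X l w b = l b x0" for b
  proof -
    have "wloss X l w b = (\<Sum>x\<in>X. if x = x0 then l b x else 0)"
      unfolding wloss_def w_def by (rule sum.cong) auto
    then show ?thesis using finite_X x0 by simp
  qed
  ultimately obtain bc where bc: "bc \<in> B" and bc_min: "\<And>b. b \<in> B \<Longrightarrow> l bc x0 \<le> l b x0"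
    using selector_argmin[OF selector] by metis
  have "l bc x0 \<le> (\<integral>u. l (sel (Pu X h xs t u)) (xs t) \<partial>dither X)" if t: "t \<in> {1..n}" for t
  proof -
    have t1: "1 \<le> t" using t by simp
    have "AE u in dither X. l bc x0 \<le> l (sel (Pu X h xs t u)) (xs t)"
      using AE_choice_in_Bopt[OF h t1, where xs=xs] by eventually_elim (use t in \<open>simp add: xs_def bc_min\<close>)
    then have "(\<integral>u. l bc x0 \<partial>dither X) \<le> (\<integral>u. l (sel (Pu X h xs t u)) (xs t) \<partial>dither X)"
      using integrable_round_loss[OF h t1, where xs=xs] t xs by (intro integral_mono_AE) auto
    then show ?thesis by (simp add: prob_space)
  qed
  then have "(\<Sum>t=1..n. l bc (xs t)) \<le> (\<Sum>t=1..n. \<integral>u. l (sel (Pu X h xs t u)) (xs t) \<partial>dither X)"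
    by (intro sum_mono) (simp add: xs_def)
  moreover have "Lstar B l xs n \<le> (\<Sum>t=1..n. l bc (xs t))"
    unfolding Lstar_def
  proof (rule cINF_lower[OF _ bc])
    show "bdd_below ((\<lambda>b. \<Sum>t=1..n. l b (xs t)) ` B)"
      by (rule bdd_belowI2[where m="\<Sum>t=1..n. l bc (xs t)"]) (auto simp: xs_def intro!: mult_left_mono bc_min)
  qed
  ultimately show ?thesis
    unfolding xs_def[symmetric] exp_regret_eq_sum[OF h xs] by linarith
qed

lemma regret_max_bounds:
  assumes h: "admissible_schedule h" and n: "1 \<le> n"
  shows "0 \<le> regret_max X B l sel h n"
    and "regret_max X B l sel h n
      \<le> Rbound X B l * (\<Sum>t=1..n. 1 / h t) + Rbound X B l * real (card X) * h n"
proof -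
  obtain x0 where x0: "x0 \<in> X" using X_nonempty by auto
  have fin: "finite ({1..n} \<rightarrow>\<^sub>E X)" using finite_X by (simp add: finite_PiE)
  have const: "(\<lambda>t\<in>{1..n}. x0) \<in> {1..n} \<rightarrow>\<^sub>E X" using x0 by auto
  show "0 \<le> regret_max X B l sel h n"
    unfolding regret_max_def using exp_regret_constant_nonneg[OF h n x0] fin const
    by (intro order_trans[OF _ Max_ge]) auto
  show "regret_max X B l sel h n
      \<le> Rbound X B l * (\<Sum>t=1..n. 1 / h t) + Rbound X B l * real (card X) * h n"
    unfolding regret_max_def
  proof (subst Max_le_iff)
    show "finite ((\<lambda>xs. exp_regret X B l sel h xs n) ` ({1..n} \<rightarrow>\<^sub>E X))" using fin by simp
    show "(\<lambda>xs. exp_regret X B l sel h xs n) ` ({1..n} \<rightarrow>\<^sub>E X) \<noteq> {}" using const by blast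
  qed (use exp_regret_le[OF h n] in \<open>auto simp: PiE_iff\<close>)
qed

lemma regret_max_powr_schedule:
  assumes h1: "0 < h1" and \<alpha>: "0 < \<alpha>" "\<alpha> < 1"
  shows "(\<lambda>n. regret_max X B l sel (\<lambda>t. h1 * real t powr \<alpha>) n / real n) \<longlonglongrightarrow> 0"
proof -
  define h where "h t = h1 * real t powr \<alpha>" for t :: nat
  define R where "R = Rbound X B l"
  define c where "c = real (card X)"
  define ub where "ub n = R / (h1 * (1 - \<alpha>)) * real n powr (-\<alpha>) + R * c * h1 * real n powr (\<alpha> - 1)"
    for n :: nat
  have h: "admissible_schedule h"
    unfolding admissible_schedule_def h_def using h1 \<alpha> by (auto intro!: mult_left_mono powr_mono2)
  have up: "regret_max X B l sel h n / real n \<le> ub n" if n: "1 \<le> n" for n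
  proof -
    have "(\<Sum>t=1..n. 1 / h t) = (\<Sum>t=1..n. real t powr (-\<alpha>)) / h1"
      by (simp add: h_def sum_divide_distrib powr_minus_divide mult.commute)
    also have "\<dots> \<le> real n powr (1 - \<alpha>) / (1 - \<alpha>) / h1"
      using divide_right_mono[OF sum_powr_neg_le[OF \<alpha>, of n], of h1] h1 by simp
    finally have "regret_max X B l sel h n \<le> R * (real n powr (1 - \<alpha>) / (1 - \<alpha>) / h1) + R * c * h n"
      using regret_max_bounds(2)[OF h n] Rbound_nonneg unfolding R_def c_def
      by (meson add_mono mult_left_mono order_trans order_refl)
    then have "regret_max X B l sel h n / real n
        \<le> (R * (real n powr (1 - \<alpha>) / (1 - \<alpha>) / h1) + R * c * h n) / real n"
      by (simp add: divide_right_mono)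
    also have "\<dots> = ub n"
      using n h1 \<alpha> powr_diff[of "real n" "1 - \<alpha>" 1] powr_diff[of "real n" \<alpha> 1]
      unfolding ub_def h_def by (simp add: field_simps)
    finally show ?thesis .
  qed
  have lo: "0 \<le> regret_max X B l sel h n / real n" if "1 \<le> n" for n
    using regret_max_bounds(1)[OF h that] by simp
  have "ub \<longlonglongrightarrow> 0"
    unfolding ub_def using \<alpha>
    by (intro tendsto_add_zero tendsto_mult_right_zero tendsto_neg_powr filterlim_real_sequentially) auto
  then have "(\<lambda>n. regret_max X B l sel h n / real n) \<longlonglongrightarrow> 0"
    by (rule tendsto_sandwich[rotated 2, OF tendsto_const])
       (auto intro!: eventually_sequentiallyI[of 1] lo up)
  then show ?thesis unfolding h_def .
qed

lemma regret_max_sqrt_schedule: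
  assumes n: "1 \<le> n"
  shows "regret_max X B l sel (\<lambda>t. sqrt (2 * real t / real (card X))) n / real n
    \<le> 4 * Rbound X B l * sqrt (2 * real (card X) / real n)"
proof -
  define c where "c = real (card X)"
  define h where "h t = sqrt (2 * real t / c)" for t :: nat
  define R where "R = Rbound X B l"
  have c: "0 < c" unfolding c_def using finite_X X_nonempty by (simp add: card_gt_0_iff)
  have h: "admissible_schedule h"
    unfolding admissible_schedule_def h_def using c by (auto intro!: divide_right_mono)
  have "(\<Sum>t=1..n. 1 / h t) = sqrt (c / 2) * (\<Sum>t=1..n. 1 / sqrt (real t))"
    unfolding h_def by (simp add: sum_distrib_left real_sqrt_divide real_sqrt_mult)
  also have "\<dots> \<le> sqrt (c / 2) * (2 * sqrt (real n))"
    using sum_inverse_sqrt_le[of n] c by (intro mult_left_mono) auto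
  also have "\<dots> = sqrt (2 * c * real n)"
    by (simp add: real_sqrt_mult real_sqrt_divide field_simps)
  finally have sum_le: "(\<Sum>t=1..n. 1 / h t) \<le> sqrt (2 * c * real n)" .
  have "c * h n = sqrt (2 * c * real n)"
    unfolding h_def using c by (simp add: real_sqrt_divide real_sqrt_mult field_simps)
  then have "regret_max X B l sel h n \<le> 2 * R * sqrt (2 * c * real n)"
    using regret_max_bounds(2)[OF h n] mult_left_mono[OF sum_le Rbound_nonneg]
    unfolding R_def c_def by (simp add: mult.assoc)
  then have "regret_max X B l sel h n / real n \<le> 2 * R * (sqrt (2 * c * real n) / real n)"
    by (simp add: divide_right_mono)
  also have "sqrt (2 * c * real n) / real n = sqrt (2 * c / real n)"
    using n by (simp add: real_sqrt_divide real_sqrt_mult field_simps)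
  also have "2 * R * sqrt (2 * c / real n) \<le> 4 * R * sqrt (2 * c / real n)"
    using Rbound_nonneg c unfolding R_def by (intro mult_right_mono) auto
  finally show ?thesis unfolding h_def c_def R_def .
qed

lemma regret_bounds: "regret_bounds X B l sel (Rbound X B l)"
proof -
  have "regret_max X B l sel h n
      \<le> 2 * Rbound X B l * (\<Sum>t=1..n. 1 / h t) + 2 * Rbound X B l * real (card X) * h n"
    if "admissible_schedule h" "1 \<le> n" for h n
  proof -
    have pos: "0 < h t" if "1 \<le> t" for t using schedule_pos \<open>admissible_schedule h\<close> that .
    have "0 \<le> (\<Sum>t=1..n. 1 / h t)" using pos by (intro sum_nonneg) (simp add: less_imp_le)
    moreover have "0 \<le> real (card X) * h n" using pos[OF \<open>1 \<le> n\<close>] by simp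
    ultimately have "0 \<le> Rbound X B l * (\<Sum>t=1..n. 1 / h t)"
      and "0 \<le> Rbound X B l * (real (card X) * h n)"
      using Rbound_nonneg by simp_all
    then show ?thesis using regret_max_bounds(2)[OF that] by (simp add: mult.assoc)
  qed
  then show ?thesis
    unfolding regret_bounds_def admissible_schedule_def
    using regret_max_powr_schedule regret_max_sqrt_schedule by auto
qed

end

lemma regret_bounds_mono:
  assumes "regret_bounds X B l sel R" and "R \<le> R'"
  shows "regret_bounds X B l sel R'"
  unfolding regret_bounds_def
proof (intro conjI allI impI)
  fix h :: "nat \<Rightarrow> real" and n :: nat
  assume h: "\<forall>t\<ge>1. 0 < h t" "\<forall>s t. 1 \<le> s \<longrightarrow> s \<le> t \<longrightarrow> h s \<le> h t" and "1 \<le> n"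
  have "0 \<le> (\<Sum>t=1..n. 1 / h t)" "0 \<le> real (card X) * h n"
    using h \<open>1 \<le> n\<close> by (auto intro!: sum_nonneg simp: less_imp_le)
  then have "R * (\<Sum>t=1..n. 1 / h t) \<le> R' * (\<Sum>t=1..n. 1 / h t)"
    and "R * (real (card X) * h n) \<le> R' * (real (card X) * h n)"
    using \<open>R \<le> R'\<close> by (simp_all add: mult_right_mono)
  moreover have "regret_max X B l sel h n \<le> 2 * R * (\<Sum>t=1..n. 1 / h t) + 2 * R * real (card X) * h n"
    using assms(1) h \<open>1 \<le> n\<close> unfolding regret_bounds_def by blast
  ultimately show "regret_max X B l sel h n \<le> 2 * R' * (\<Sum>t=1..n. 1 / h t) + 2 * R' * real (card X) * h n"
    by (simp add: mult.assoc)
next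
  fix n :: nat assume "1 \<le> n"
  have "R * sqrt (2 * real (card X) / real n) \<le> R' * sqrt (2 * real (card X) / real n)"
    using \<open>R \<le> R'\<close> by (simp add: mult_right_mono)
  moreover have "regret_max X B l sel (\<lambda>t. sqrt (2 * real t / real (card X))) n / real n
      \<le> 4 * R * sqrt (2 * real (card X) / real n)"
    using assms(1) \<open>1 \<le> n\<close> unfolding regret_bounds_def by blast
  ultimately show "regret_max X B l sel (\<lambda>t. sqrt (2 * real t / real (card X))) n / real n
      \<le> 4 * R' * sqrt (2 * real (card X) / real n)"
    by (simp add: mult.assoc)
qed (use assms in \<open>auto simp: regret_bounds_def\<close>)

lemma weighted_sqdist_decomp:
  fixes Y :: "'a::real_inner set"
  assumes "finite Y" and W: "W = (\<Sum>x\<in>Y. w x)" "W \<noteq> 0"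
    and m: "m = (1 / W) *\<^sub>R (\<Sum>x\<in>Y. w x *\<^sub>R x)"
  shows "(\<Sum>x\<in>Y. w x * (norm (b - x))\<^sup>2) = W * (norm (b - m))\<^sup>2 + (\<Sum>x\<in>Y. w x * (norm (m - x))\<^sup>2)"
proof -
  have "W *\<^sub>R m = (\<Sum>x\<in>Y. w x *\<^sub>R x)" using W m by simp
  then have centred: "(\<Sum>x\<in>Y. w x *\<^sub>R (m - x)) = 0"
    using W by (simp add: scaleR_diff_right sum_subtractf scaleR_sum_left)
  have expand: "(norm (b - x))\<^sup>2 = (norm (b - m))\<^sup>2 + 2 * inner (b - m) (m - x) + (norm (m - x))\<^sup>2" for x
  proof -
    have "(norm ((b - m) + (m - x)))\<^sup>2 = (norm (b - m))\<^sup>2 + 2 * inner (b - m) (m - x) + (norm (m - x))\<^sup>2"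
      unfolding power2_norm_eq_inner inner_add_left inner_add_right by (simp add: inner_commute)
    then show ?thesis by simp
  qed
  have "(\<Sum>x\<in>Y. w x * (norm (b - x))\<^sup>2)
      = (\<Sum>x\<in>Y. w x * (norm (b - m))\<^sup>2 + 2 * inner (b - m) (w x *\<^sub>R (m - x)) + w x * (norm (m - x))\<^sup>2)"
    by (intro sum.cong refl) (subst expand, simp add: algebra_simps)
  also have "\<dots> = W * (norm (b - m))\<^sup>2 + 2 * inner (b - m) (\<Sum>x\<in>Y. w x *\<^sub>R (m - x))
      + (\<Sum>x\<in>Y. w x * (norm (m - x))\<^sup>2)"
    unfolding W by (simp add: sum.distrib sum_distrib_left sum_distrib_right inner_sum_right)
  finally show ?thesis using centred by simp
qed

lemma argmin_sqdist_eq_weighted_mean: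
  fixes Y :: "'a::real_inner set"
  assumes "finite Y" and "weights_ok Y w" and b: "b \<in> argmin_set Y UNIV (\<lambda>b x. (norm (b - x))\<^sup>2) w"
  shows "b = (1 / (\<Sum>x\<in>Y. w x)) *\<^sub>R (\<Sum>x\<in>Y. w x *\<^sub>R x)"
proof -
  define W where "W = (\<Sum>x\<in>Y. w x)"
  define m where "m = (1 / W) *\<^sub>R (\<Sum>x\<in>Y. w x *\<^sub>R x)"
  have "0 < W" unfolding W_def using assms(1,2) unfolding weights_ok_def by (metis sum_pos2)
  note decomp = weighted_sqdist_decomp[OF assms(1) W_def _ m_def]
  have "wloss Y (\<lambda>b x. (norm (b - x))\<^sup>2) w b \<le> wloss Y (\<lambda>b x. (norm (b - x))\<^sup>2) w m"
    using b unfolding argmin_set_def by auto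
  then have "W * (norm (b - m))\<^sup>2 \<le> 0"
    unfolding wloss_def using decomp[of b] decomp[of m] \<open>0 < W\<close> by simp
  then show ?thesis using \<open>0 < W\<close> unfolding m_def W_def by (simp add: mult_le_0_iff)
qed

lemma norm_weighted_mean_diff_le:
  fixes Y :: "'a::real_normed_vector set"
  assumes "finite Y" and w: "\<forall>x\<in>Y. 0 \<le> w x" and W: "0 < (\<Sum>x\<in>Y. w x)"
    and d: "\<And>x. x \<in> Y \<Longrightarrow> norm (x - y) \<le> d"
  shows "norm ((1 / (\<Sum>x\<in>Y. w x)) *\<^sub>R (\<Sum>x\<in>Y. w x *\<^sub>R x) - y) \<le> d"
proof -
  define W where "W = (\<Sum>x\<in>Y. w x)"
  have "(1 / W) *\<^sub>R (\<Sum>x\<in>Y. w x *\<^sub>R x) - y = (1 / W) *\<^sub>R (\<Sum>x\<in>Y. w x *\<^sub>R (x - y))"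
    using W unfolding W_def by (simp add: scaleR_diff_right sum_subtractf scaleR_sum_left[symmetric])
  also have "norm \<dots> \<le> (1 / W) * (\<Sum>x\<in>Y. w x * d)"
  proof -
    have "norm (\<Sum>x\<in>Y. w x *\<^sub>R (x - y)) \<le> (\<Sum>x\<in>Y. w x * d)"
      using w d by (intro order_trans[OF norm_sum] sum_mono) (simp add: mult_left_mono)
    then show ?thesis using W unfolding W_def by (simp add: divide_right_mono)
  qed
  also have "\<dots> = d" using W unfolding W_def by (simp add: sum_distrib_right[symmetric])
  finally show ?thesis unfolding W_def .
qed

lemma Bopt_sqdist_le_diameter:
  fixes Y :: "'a::real_inner set"
  assumes fin: "finite Y" and b: "b \<in> Bopt Y UNIV (\<lambda>b x. (norm (b - x))\<^sup>2)" and y: "y \<in> Y"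
  shows "(norm (b - y))\<^sup>2 \<le> Max {(norm (x - x'))\<^sup>2 | x x'. x \<in> Y \<and> x' \<in> Y}"
proof -
  define M where "M = Max {(norm (x - x'))\<^sup>2 | x x'. x \<in> Y \<and> x' \<in> Y}"
  have "{(norm (x - x'))\<^sup>2 | x x'. x \<in> Y \<and> x' \<in> Y} = (\<lambda>(x, x'). (norm (x - x'))\<^sup>2) ` (Y \<times> Y)"
    by auto
  then have le_M: "(norm (x - x'))\<^sup>2 \<le> M" if "x \<in> Y" "x' \<in> Y" for x x'
    unfolding M_def using fin that by (intro Max_ge) auto
  obtain w where w: "weights_ok Y w" and b_min: "b \<in> argmin_set Y UNIV (\<lambda>b x. (norm (b - x))\<^sup>2) w"
    using b unfolding Bopt_def by auto
  have "0 < (\<Sum>x\<in>Y. w x)" using fin w unfolding weights_ok_def by (metis sum_pos2)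
  then have "norm (b - y) \<le> sqrt M"
    unfolding argmin_sqdist_eq_weighted_mean[OF fin w b_min]
    using fin w le_M[OF _ y] unfolding weights_ok_def
    by (intro norm_weighted_mean_diff_le) (auto simp: real_le_rsqrt)
  then have "(norm (b - y))\<^sup>2 \<le> (sqrt M)\<^sup>2" by (simp add: power_mono)
  also have "\<dots> = M" using le_M[OF y y] by simp
  finally show ?thesis unfolding M_def .
qed

lemma perturbed_leader_sqdist:
  fixes Y :: "'a::real_inner set"
  assumes "finite Y" and "Y \<noteq> {}" and "selector Y UNIV (\<lambda>b x. (norm (b - x))\<^sup>2) sel"
  shows "perturbed_leader Y UNIV (\<lambda>b x. (norm (b - x))\<^sup>2) sel"
proof
  show "bdd_above {(\<lambda>b x. (norm (b - x))\<^sup>2) b x | b x. b \<in> Bopt Y UNIV (\<lambda>b x. (norm (b - x))\<^sup>2) \<and> x \<in> Y}"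
    using Bopt_sqdist_le_diameter[OF assms(1)] by (intro bdd_aboveI) auto
qed (use assms in auto)

theorem corollary2p1:
  fixes X :: "'x set" and B :: "'b set" and l :: "'b \<Rightarrow> 'x \<Rightarrow> real"
    and sel :: "('x \<Rightarrow> real) \<Rightarrow> 'b"
  assumes "finite X" and "X \<noteq> {}"
    and "selector X B l sel"
    and "bdd_above {l b x | b x. b \<in> Bopt X B l \<and> x \<in> X}"
    and "\<forall>b\<in>Bopt X B l. \<forall>x\<in>X. 0 \<le> l b x"
  shows "regret_bounds X B l sel (Rbound X B l) \<and>
    (\<forall>(Y :: (real ^ 'd) set) sel'. finite Y \<longrightarrow> Y \<noteq> {} \<longrightarrow>
        selector Y UNIV (\<lambda>b x. (norm (b - x))\<^sup>2) sel' \<longrightarrow>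
        regret_bounds Y UNIV (\<lambda>b x. (norm (b - x))\<^sup>2) sel'
          (Max {(norm (x - x'))\<^sup>2 | x x'. x \<in> Y \<and> x' \<in> Y}))"
proof (intro conjI allI impI)
  interpret perturbed_leader X B l sel
    using assms by unfold_locales auto
  show "regret_bounds X B l sel (Rbound X B l)" by (rule regret_bounds)
next
  fix Y :: "(real ^ 'd) set" and sel'
  assume "finite Y" "Y \<noteq> {}" "selector Y UNIV (\<lambda>b x. (norm (b - x))\<^sup>2) sel'"
  then interpret perturbed_leader Y UNIV "\<lambda>b x. (norm (b - x))\<^sup>2" sel'
    by (rule perturbed_leader_sqdist)
  have "Rbound Y UNIV (\<lambda>b x. (norm (b - x))\<^sup>2) \<le> Max {(norm (x - x'))\<^sup>2 | x x'. x \<in> Y \<and> x' \<in> Y}"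
    using Bopt_sqdist_le_diameter[OF \<open>finite Y\<close>] by (intro Rbound_le)
  with regret_bounds show "regret_bounds Y UNIV (\<lambda>b x. (norm (b - x))\<^sup>2) sel'
      (Max {(norm (x - x'))\<^sup>2 | x x'. x \<in> Y \<and> x' \<in> Y})"
    by (rule regret_bounds_mono)
qed

end
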